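(* Let $\mathcal V\subseteq B(H)$ be an operator system and suppose $p\in\mathcal V$ is a projection in $B(H)$. Then $\{C(p_n)\}_n$ is a (not necessarily proper) matrix ordering on $\mathcal V$. Furthermore, if $q\in\mathcal V$ satisfies $p\le q\le I$, then $q$ is an Archimedean matrix order unit for $(\mathcal V,\{C(p_n)\}_n)$.
   Context: $p_n=I_n\otimes p$ and $C(p_n)=\{x\in M_n(\mathcal V): x=x^*,\ p_nxp_n\ge0\text{ in }B(H^n)\}$. A (not necessarily proper) matrix ordering is a sequence of cones $D_n\subseteq M_n(\mathcal V)_h$ with $\alpha^*D_n\alpha\subseteq D_m$ for all $\alpha\in M_{n,m}$. An element $u$ is an Archimedean matrix order unit for $\{D_n\}$ if for every hermitian $x\in M_n(\mathcal V)$ there is $r>0$ with $ru_n-x\in D_n$ ($u_n=I_n\otimes u$), and $x+\epsilon u_n\in D_n$ for all $\epsilon>0$ implies $x\in D_n$. *)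

theory Defs
  imports Complex_Main
begin

class complex_hilbert = ab_group_add +
  fixes scaleC :: "complex \<Rightarrow> 'a \<Rightarrow> 'a"
    and cinner :: "'a \<Rightarrow> 'a \<Rightarrow> complex"
  assumes scaleC_add_right: "scaleC a (x + y) = scaleC a x + scaleC a y"
    and scaleC_add_left: "scaleC (a + b) x = scaleC a x + scaleC b x"
    and scaleC_scaleC: "scaleC a (scaleC b x) = scaleC (a * b) x"
    and scaleC_one: "scaleC 1 x = x"
    and cinner_add_left: "cinner (x + y) z = cinner x z + cinner y z"
    and cinner_scaleC_left: "cinner (scaleC a x) y = a * cinner x y"
    and cinner_commute: "cinner y x = cnj (cinner x y)"
    and cinner_ge_zero: "0 \<le> Re (cinner x x)"
    and cinner_eq_zero_iff: "cinner x x = 0 \<longleftrightarrow> x = 0"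
    and cinner_complete:
      "(\<forall>e>0. \<exists>N::nat. \<forall>m\<ge>N. \<forall>n\<ge>N. sqrt (Re (cinner (X m - X n) (X m - X n))) < e)
       \<Longrightarrow> (\<exists>L. \<forall>e>0. \<exists>N::nat. \<forall>n\<ge>N. sqrt (Re (cinner (X n - L) (X n - L))) < e)"

definition cnorm :: "'a::complex_hilbert \<Rightarrow> real" where
  "cnorm x = sqrt (Re (cinner x x))"

definition bounded_op :: "('a::complex_hilbert \<Rightarrow> 'a) \<Rightarrow> bool" where
  "bounded_op T \<longleftrightarrow> (\<forall>x y. T (x + y) = T x + T y) \<and> (\<forall>c x. T (scaleC c x) = scaleC c (T x))
     \<and> (\<exists>K. \<forall>x. cnorm (T x) \<le> K * cnorm x)"

definition BH :: "('a::complex_hilbert \<Rightarrow> 'a) set" where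
  "BH = {T. bounded_op T}"

definition adj :: "('a::complex_hilbert \<Rightarrow> 'a) \<Rightarrow> ('a \<Rightarrow> 'a)" where
  "adj T = (THE S. \<forall>x y. cinner (T x) y = cinner x (S y))"

definition op_zero :: "'a::complex_hilbert \<Rightarrow> 'a" where
  "op_zero = (\<lambda>x. 0)"

definition op_add :: "('a::complex_hilbert \<Rightarrow> 'a) \<Rightarrow> ('a \<Rightarrow> 'a) \<Rightarrow> ('a \<Rightarrow> 'a)" where
  "op_add S T = (\<lambda>x. S x + T x)"

definition op_diff :: "('a::complex_hilbert \<Rightarrow> 'a) \<Rightarrow> ('a \<Rightarrow> 'a) \<Rightarrow> ('a \<Rightarrow> 'a)" where
  "op_diff S T = (\<lambda>x. S x - T x)"

definition op_scale :: "complex \<Rightarrow> ('a::complex_hilbert \<Rightarrow> 'a) \<Rightarrow> ('a \<Rightarrow> 'a)" where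
  "op_scale c T = (\<lambda>x. scaleC c (T x))"

definition op_pos :: "('a::complex_hilbert \<Rightarrow> 'a) \<Rightarrow> bool" where
  "op_pos T \<longleftrightarrow> T \<in> BH \<and> (\<forall>\<xi>. Im (cinner (T \<xi>) \<xi>) = 0 \<and> 0 \<le> Re (cinner (T \<xi>) \<xi>))"

definition op_le :: "('a::complex_hilbert \<Rightarrow> 'a) \<Rightarrow> ('a \<Rightarrow> 'a) \<Rightarrow> bool" where
  "op_le S T \<longleftrightarrow> op_pos (op_diff T S)"

definition is_projection :: "('a::complex_hilbert \<Rightarrow> 'a) \<Rightarrow> bool" where
  "is_projection p \<longleftrightarrow> p \<in> BH \<and> p \<circ> p = p \<and> adj p = p"

definition operator_system :: "('a::complex_hilbert \<Rightarrow> 'a) set \<Rightarrow> bool" where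
  "operator_system V \<longleftrightarrow> V \<subseteq> BH \<and> id \<in> V \<and> op_zero \<in> V
     \<and> (\<forall>S\<in>V. \<forall>T\<in>V. op_add S T \<in> V) \<and> (\<forall>c. \<forall>T\<in>V. op_scale c T \<in> V)
     \<and> (\<forall>T\<in>V. adj T \<in> V)"

text \<open>An n x n matrix over operators is a function nat \<Rightarrow> nat \<Rightarrow> op, with entries
  outside {0..<n} x {0..<n} equal to zero. Scalar n x m matrices are nat \<Rightarrow> nat \<Rightarrow> complex,
  likewise zero outside the index range.\<close>

definition mats :: "('a::complex_hilbert \<Rightarrow> 'a) set \<Rightarrow> nat \<Rightarrow> (nat \<Rightarrow> nat \<Rightarrow> 'a \<Rightarrow> 'a) set" where
  "mats V n = {x. (\<forall>i<n. \<forall>j<n. x i j \<in> V) \<and> (\<forall>i j. \<not> (i < n \<and> j < n) \<longrightarrow> x i j = op_zero)}"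

definition herm_mats :: "('a::complex_hilbert \<Rightarrow> 'a) set \<Rightarrow> nat \<Rightarrow> (nat \<Rightarrow> nat \<Rightarrow> 'a \<Rightarrow> 'a) set" where
  "herm_mats V n = {x \<in> mats V n. \<forall>i<n. \<forall>j<n. x i j = adj (x j i)}"

definition scalar_mats :: "nat \<Rightarrow> nat \<Rightarrow> (nat \<Rightarrow> nat \<Rightarrow> complex) set" where
  "scalar_mats n m = {\<alpha>. \<forall>i j. \<not> (i < n \<and> j < m) \<longrightarrow> \<alpha> i j = 0}"

definition mat_add :: "(nat \<Rightarrow> nat \<Rightarrow> 'a::complex_hilbert \<Rightarrow> 'a) \<Rightarrow> (nat \<Rightarrow> nat \<Rightarrow> 'a \<Rightarrow> 'a) \<Rightarrow> (nat \<Rightarrow> nat \<Rightarrow> 'a \<Rightarrow> 'a)" where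
  "mat_add x y = (\<lambda>i j. op_add (x i j) (y i j))"

definition mat_diff :: "(nat \<Rightarrow> nat \<Rightarrow> 'a::complex_hilbert \<Rightarrow> 'a) \<Rightarrow> (nat \<Rightarrow> nat \<Rightarrow> 'a \<Rightarrow> 'a) \<Rightarrow> (nat \<Rightarrow> nat \<Rightarrow> 'a \<Rightarrow> 'a)" where
  "mat_diff x y = (\<lambda>i j. op_diff (x i j) (y i j))"

definition mat_scaleR :: "real \<Rightarrow> (nat \<Rightarrow> nat \<Rightarrow> 'a::complex_hilbert \<Rightarrow> 'a) \<Rightarrow> (nat \<Rightarrow> nat \<Rightarrow> 'a \<Rightarrow> 'a)" where
  "mat_scaleR t x = (\<lambda>i j. op_scale (complex_of_real t) (x i j))"

definition ampl :: "nat \<Rightarrow> ('a::complex_hilbert \<Rightarrow> 'a) \<Rightarrow> (nat \<Rightarrow> nat \<Rightarrow> 'a \<Rightarrow> 'a)" where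
  "ampl n u = (\<lambda>i j. if i = j \<and> i < n then u else op_zero)"

text \<open>\<alpha>* x \<alpha> for \<alpha> an n x m scalar matrix and x an n x n operator matrix.\<close>
definition congr :: "nat \<Rightarrow> nat \<Rightarrow> (nat \<Rightarrow> nat \<Rightarrow> complex) \<Rightarrow> (nat \<Rightarrow> nat \<Rightarrow> 'a::complex_hilbert \<Rightarrow> 'a)
    \<Rightarrow> (nat \<Rightarrow> nat \<Rightarrow> 'a \<Rightarrow> 'a)" where
  "congr n m \<alpha> x = (\<lambda>k l. if k < m \<and> l < m
      then (\<lambda>\<xi>. \<Sum>i<n. \<Sum>j<n. scaleC (cnj (\<alpha> i k) * \<alpha> j l) (x i j \<xi>))
      else op_zero)"

text \<open>Positivity of an n x n operator matrix as an operator on H^n.\<close>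
definition mat_pos :: "nat \<Rightarrow> (nat \<Rightarrow> nat \<Rightarrow> 'a::complex_hilbert \<Rightarrow> 'a) \<Rightarrow> bool" where
  "mat_pos n X \<longleftrightarrow> (\<forall>\<xi> :: nat \<Rightarrow> 'a.
     Im (\<Sum>i<n. \<Sum>j<n. cinner (X i j (\<xi> j)) (\<xi> i)) = 0 \<and>
     0 \<le> Re (\<Sum>i<n. \<Sum>j<n. cinner (X i j (\<xi> j)) (\<xi> i)))"

definition Cp :: "('a::complex_hilbert \<Rightarrow> 'a) set \<Rightarrow> ('a \<Rightarrow> 'a) \<Rightarrow> nat \<Rightarrow> (nat \<Rightarrow> nat \<Rightarrow> 'a \<Rightarrow> 'a) set" where
  "Cp V p n = {x \<in> herm_mats V n. mat_pos n (\<lambda>i j. p \<circ> x i j \<circ> p)}"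

definition is_cone :: "(nat \<Rightarrow> nat \<Rightarrow> 'a::complex_hilbert \<Rightarrow> 'a) set \<Rightarrow> bool" where
  "is_cone C \<longleftrightarrow> (\<forall>x\<in>C. \<forall>y\<in>C. mat_add x y \<in> C) \<and> (\<forall>t\<ge>0. \<forall>x\<in>C. mat_scaleR t x \<in> C)"

text \<open>(Not necessarily proper) matrix ordering; n ranges over positive integers.\<close>
definition matrix_ordering :: "('a::complex_hilbert \<Rightarrow> 'a) set \<Rightarrow> (nat \<Rightarrow> (nat \<Rightarrow> nat \<Rightarrow> 'a \<Rightarrow> 'a) set) \<Rightarrow> bool" where
  "matrix_ordering V D \<longleftrightarrow> (\<forall>n\<ge>1. D n \<subseteq> herm_mats V n \<and> is_cone (D n)
     \<and> (\<forall>m\<ge>1. \<forall>\<alpha>\<in>scalar_mats n m. \<forall>x\<in>D n. congr n m \<alpha> x \<in> D m))"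

definition archimedean_matrix_order_unit ::
  "('a::complex_hilbert \<Rightarrow> 'a) set \<Rightarrow> (nat \<Rightarrow> (nat \<Rightarrow> nat \<Rightarrow> 'a \<Rightarrow> 'a) set) \<Rightarrow> ('a \<Rightarrow> 'a) \<Rightarrow> bool" where
  "archimedean_matrix_order_unit V D u \<longleftrightarrow> u \<in> V \<and> (\<forall>n\<ge>1.
     (\<forall>x\<in>herm_mats V n. \<exists>r>0. mat_diff (mat_scaleR r (ampl n u)) x \<in> D n) \<and>
     (\<forall>x\<in>herm_mats V n. (\<forall>\<epsilon>>0. mat_add x (mat_scaleR \<epsilon> (ampl n u)) \<in> D n) \<longrightarrow> x \<in> D n))"

end

theory Submission
  imports Defs "HOL-Library.Complex_Order"
begin

text \<open>
  For hermitian \<open>x\<close>, positivity of \<open>p\<^sub>n x p\<^sub>n\<close> is positivity of the quadratic form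
  \<open>\<Sum>\<^sub>i\<^sub>j \<langle>x\<^sub>i\<^sub>j \<eta>\<^sub>j, \<eta>\<^sub>i\<rangle>\<close> on tuples \<open>\<eta>\<close> with \<open>p \<eta>\<^sub>i = \<eta>\<^sub>i\<close>. The form is additive and
  positively homogeneous in \<open>x\<close>, and the form of \<open>\<alpha>* x \<alpha>\<close> at \<open>\<eta>\<close> is the form of \<open>x\<close> at
  \<open>\<alpha> \<eta>\<close>, which again lies in the range of \<open>p\<^sub>n\<close> because \<open>\<alpha>\<close> is scalar; hence the
  cones \<open>C(p\<^sub>n)\<close> form a matrix ordering. If \<open>p \<le> q\<close>, the form of \<open>q\<^sub>n\<close> at such \<open>\<eta>\<close> is at
  least \<open>\<Sum>\<^sub>i \<parallel>\<eta>\<^sub>i\<parallel>\<^sup>2\<close>, while boundedness of the entries of \<open>x\<close> bounds the form of \<open>x\<close> by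
  \<open>K \<Sum>\<^sub>i \<parallel>\<eta>\<^sub>i\<parallel>\<^sup>2\<close>; so \<open>r q\<^sub>n - x \<in> C(p\<^sub>n)\<close> for large \<open>r\<close>. The Archimedean property holds
  because the nonnegative reals are closed.

  Hermitian matrices are defined through \<open>adj\<close>, a definite description, so the argument
  needs adjoints of bounded operators to exist: the Riesz representation theorem, proved by
  minimising the norm on the affine hyperplane \<open>f = 1\<close>.
\<close>

lemma scaleC_zero_left [simp]: "scaleC 0 (x::'a::complex_hilbert) = 0"
  using scaleC_add_left [of 0 0 x] by simp

lemma scaleC_minus_left: "scaleC (- a) (x::'a::complex_hilbert) = - scaleC a x"
  using scaleC_add_left [of a "- a" x] by (simp add: eq_neg_iff_add_eq_0 add.commute)

lemma scaleC_zero_right [simp]: "scaleC a (0::'a::complex_hilbert) = 0"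
  using scaleC_add_right [of a 0 0] by simp

lemma cinner_zero_left [simp]: "cinner (0::'a::complex_hilbert) y = 0"
  using cinner_add_left [of 0 0 y] by simp

lemma cinner_zero_right [simp]: "cinner (x::'a::complex_hilbert) 0 = 0"
  by (subst cinner_commute) simp

lemma cinner_add_right: "cinner (x::'a::complex_hilbert) (y + z) = cinner x y + cinner x z"
  by (subst (1 2 3) cinner_commute) (simp add: cinner_add_left)

lemma cinner_scaleC_right: "cinner (x::'a::complex_hilbert) (scaleC a y) = cnj a * cinner x y"
  by (subst (1 2) cinner_commute) (simp add: cinner_scaleC_left)

lemma cinner_minus_left: "cinner (- x::'a::complex_hilbert) y = - cinner x y"
  using cinner_add_left [of x "- x" y] by (simp add: add_eq_0_iff)

lemma cinner_diff_left: "cinner (x - z::'a::complex_hilbert) y = cinner x y - cinner z y"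
  using cinner_add_left [of x "- z" y] by (simp add: cinner_minus_left)

lemma cinner_diff_right: "cinner (x::'a::complex_hilbert) (y - z) = cinner x y - cinner x z"
  by (subst (1 2 3) cinner_commute) (simp add: cinner_diff_left)

lemma cinner_sum_left: "cinner (sum f A) (y::'a::complex_hilbert) = (\<Sum>i\<in>A. cinner (f i) y)"
  by (induct A rule: infinite_finite_induct) (simp_all add: cinner_add_left)

lemma cinner_sum_right: "cinner (x::'a::complex_hilbert) (sum f A) = (\<Sum>i\<in>A. cinner x (f i))"
  by (induct A rule: infinite_finite_induct) (simp_all add: cinner_add_right)

(* The order on complex is that of Complex_Order: 0 \<le> z means that z is a nonnegative real. *)
lemma cinner_self_nonneg: "0 \<le> cinner (x::'a::complex_hilbert) x"
proof -
  have "Im (cinner x x) = Im (cnj (cinner x x))"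
    using cinner_commute [of x x] by simp
  then show ?thesis
    using cinner_ge_zero [of x] by (simp add: less_eq_complex_def)
qed

lemma cinner_self_eq_cnorm: "cinner x x = complex_of_real (cnorm x ^ 2)"
  using cinner_self_nonneg [of x] cinner_ge_zero [of x]
  by (simp add: cnorm_def less_eq_complex_def complex_eq_iff)

lemma cnorm_nonneg: "0 \<le> cnorm x"
  using cinner_ge_zero [of x] by (simp add: cnorm_def)

lemma cnorm_zero [simp]: "cnorm 0 = 0"
  by (simp add: cnorm_def)

lemma cnorm_square: "cnorm x ^ 2 = Re (cinner x x)"
  using cinner_ge_zero [of x] by (simp add: cnorm_def)

lemma cnorm_eq_zero_iff [simp]: "cnorm x = 0 \<longleftrightarrow> x = 0"
  using cinner_eq_zero_iff [of x] by (simp add: cinner_self_eq_cnorm)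

lemma cnorm_add_scaleC_square:
  "cnorm (x + scaleC t (y::'a::complex_hilbert)) ^ 2
    = cnorm x ^ 2 + 2 * Re (t * cinner y x) + (cmod t)^2 * cnorm y ^ 2"
proof -
  have "cinner (x + scaleC t y) (x + scaleC t y)
      = cinner x x + t * cinner y x + cnj (t * cinner y x) + t * cnj t * cinner y y"
    by (simp add: cinner_add_left cinner_add_right cinner_scaleC_left cinner_scaleC_right
        cinner_commute [of x y] algebra_simps)
  then have "Re (cinner (x + scaleC t y) (x + scaleC t y))
      = Re (cinner x x) + 2 * Re (t * cinner y x) + (cmod t)^2 * Re (cinner y y)"
    by (simp add: complex_norm_square [symmetric])
  then show ?thesis
    by (simp add: cnorm_square)
qed

lemma cnorm_scaleC: "cnorm (scaleC c x) = cmod c * cnorm x"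
  using cnorm_add_scaleC_square [of 0 c x] cnorm_nonneg [of x] cnorm_nonneg [of "scaleC c x"]
  by (simp add: power_mult_distrib [symmetric] power2_eq_iff_nonneg)

lemma cnorm_minus_commute: "cnorm (x - y) = cnorm (y - x)"
  using cnorm_scaleC [of "- 1" "x - y"] by (simp add: scaleC_minus_left scaleC_one)

lemma cauchy_schwarz: "cmod (cinner x y) \<le> cnorm x * cnorm y"
proof (cases "y = 0")
  case True
  then show ?thesis by (simp add: cnorm_nonneg)
next
  case False
  then have N: "cnorm y ^ 2 > 0"
    using cnorm_eq_zero_iff [of y] cnorm_nonneg [of y] by simp
  define c where "c = cinner x y"
  define t where "t = - c / complex_of_real (cnorm y ^ 2)"
  have "t * cinner y x = - complex_of_real ((cmod c)^2 / cnorm y ^ 2)"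
    unfolding t_def c_def cinner_commute [of y x] by (simp add: complex_norm_square [symmetric])
  moreover have "cmod t = cmod c / cnorm y ^ 2"
    unfolding t_def by (simp add: norm_divide norm_power)
  ultimately have "cnorm (x + scaleC t y) ^ 2 = cnorm x ^ 2 - (cmod c)^2 / cnorm y ^ 2"
    using N unfolding cnorm_add_scaleC_square by (simp add: power2_eq_square field_simps)
  then have "0 \<le> cnorm x ^ 2 - (cmod c)^2 / cnorm y ^ 2"
    by (metis zero_le_power2)
  then have "(cmod c)^2 \<le> (cnorm x * cnorm y)^2"
    using N by (simp add: field_simps power_mult_distrib)
  then show ?thesis
    unfolding c_def by (meson cnorm_nonneg mult_nonneg_nonneg power2_le_imp_le)
qed

lemma cnorm_triangle: "cnorm (x + y) \<le> cnorm x + cnorm y"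
proof -
  have "cnorm (x + y) ^ 2 = cnorm x ^ 2 + 2 * Re (cinner y x) + cnorm y ^ 2"
    using cnorm_add_scaleC_square [of x 1 y] by (simp add: scaleC_one)
  also have "\<dots> \<le> (cnorm x + cnorm y)^2"
    using cauchy_schwarz [of y x] complex_Re_le_cmod [of "cinner y x"]
    by (simp add: power2_sum mult.commute)
  finally show ?thesis
    by (meson add_nonneg_nonneg cnorm_nonneg power2_le_imp_le)
qed

lemma parallelogram:
  "cnorm (x - y) ^ 2 + cnorm (x + y::'a::complex_hilbert) ^ 2 = 2 * cnorm x ^ 2 + 2 * cnorm y ^ 2"
proof -
  have "Re (cinner (x - y) (x - y)) + Re (cinner (x + y) (x + y))
      = 2 * Re (cinner x x) + 2 * Re (cinner y y)"
    by (simp add: cinner_add_left cinner_add_right cinner_diff_left cinner_diff_right)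
  then show ?thesis
    by (simp add: cnorm_square)
qed

section \<open>The Riesz representation theorem\<close>

lemma cnorm_Cauchy_convergent:
  fixes X :: "nat \<Rightarrow> 'a::complex_hilbert"
  assumes "\<forall>e>0. \<exists>N::nat. \<forall>m\<ge>N. \<forall>n\<ge>N. cnorm (X m - X n) < e"
  obtains L where "(\<lambda>n. cnorm (X n - L)) \<longlonglongrightarrow> 0"
proof -
  obtain L where "\<forall>e>0. \<exists>N::nat. \<forall>n\<ge>N. cnorm (X n - L) < e"
    using cinner_complete [of X] assms unfolding cnorm_def by blast
  then have "(\<lambda>n. cnorm (X n - L)) \<longlonglongrightarrow> 0"
    unfolding LIMSEQ_iff by (simp add: cnorm_nonneg)
  then show ?thesis by (rule that)
qed

lemma lipschitz_tendsto_cnorm: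
  fixes f :: "'a::complex_hilbert \<Rightarrow> 'b::real_normed_vector"
  assumes "(\<lambda>n. cnorm (X n - L)) \<longlonglongrightarrow> 0"
    and "\<And>x y. norm (f x - f y) \<le> C * cnorm (x - y)"
  shows "(\<lambda>n. f (X n)) \<longlonglongrightarrow> f L"
proof (rule metric_tendsto_imp_tendsto)
  show "(\<lambda>n. C * cnorm (X n - L)) \<longlonglongrightarrow> 0"
    using tendsto_mult_right_zero [OF assms(1)] .
  show "\<forall>\<^sub>F n in sequentially. dist (f (X n)) (f L) \<le> dist (C * cnorm (X n - L)) 0"
    using assms(2) by (simp add: dist_norm order_trans [OF _ abs_ge_self])
qed

lemma cnorm_tendsto:
  assumes "(\<lambda>n. cnorm (X n - L)) \<longlonglongrightarrow> 0"
  shows "(\<lambda>n. cnorm (X n)) \<longlonglongrightarrow> cnorm L"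
proof (rule lipschitz_tendsto_cnorm [where C = 1, OF assms])
  fix x y :: 'a
  show "norm (cnorm x - cnorm y) \<le> 1 * cnorm (x - y)"
    using cnorm_triangle [of "x - y" y] cnorm_triangle [of "y - x" x] cnorm_minus_commute [of x y]
    by auto
qed

lemma minimizing_sequence:
  fixes g :: "'b \<Rightarrow> real"
  assumes "A \<noteq> {}" and "\<And>x. x \<in> A \<Longrightarrow> 0 \<le> g x"
  obtains X where "\<And>k. X k \<in> A" "(\<lambda>k. g (X k)) \<longlonglongrightarrow> Inf (g ` A)"
proof -
  have bdd: "bdd_below (g ` A)"
    using assms(2) by (rule bdd_belowI2)
  have "\<exists>x\<in>A. g x < Inf (g ` A) + 1 / Suc k" for k :: nat
    using cInf_lessD [of "g ` A" "Inf (g ` A) + 1 / Suc k"] assms(1) by auto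
  then obtain X where X: "\<And>k. X k \<in> A" "\<And>k. g (X k) < Inf (g ` A) + 1 / Suc k"
    by metis
  have "(\<lambda>k. g (X k)) \<longlonglongrightarrow> Inf (g ` A)"
  proof (rule tendsto_sandwich [of "\<lambda>k. Inf (g ` A)" _ _ "\<lambda>k. Inf (g ` A) + 1 / Suc k"])
    show "\<forall>\<^sub>F k in sequentially. Inf (g ` A) \<le> g (X k)"
      using bdd X(1) by (simp add: cInf_lower)
    show "\<forall>\<^sub>F k in sequentially. g (X k) \<le> Inf (g ` A) + 1 / Suc k"
      using X(2) by (simp add: less_imp_le)
    show "(\<lambda>k. Inf (g ` A) + 1 / Suc k) \<longlonglongrightarrow> Inf (g ` A)"
      using tendsto_add [OF tendsto_const LIMSEQ_Suc [OF lim_inverse_n'], of "Inf (g ` A)"]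
      by (simp add: inverse_eq_divide)
  qed simp
  with X(1) show ?thesis
    by (rule that)
qed

lemma minimizing_sequence_Cauchy:
  fixes X :: "nat \<Rightarrow> 'a::complex_hilbert"
  assumes midpoint: "\<And>x y. x \<in> A \<Longrightarrow> y \<in> A \<Longrightarrow> scaleC (1/2) (x + y) \<in> A"
    and lower: "\<And>x. x \<in> A \<Longrightarrow> d \<le> cnorm x ^ 2"
    and X: "\<And>k. X k \<in> A" "(\<lambda>k. cnorm (X k) ^ 2) \<longlonglongrightarrow> d"
  shows "\<forall>e>0. \<exists>N::nat. \<forall>m\<ge>N. \<forall>n\<ge>N. cnorm (X m - X n) < e"
proof (intro allI impI)
  fix e :: real
  assume "e > 0"
  then have "e^2 / 4 > 0"
    by simp
  with X(2) obtain N where N: "\<And>k. k \<ge> N \<Longrightarrow> \<bar>cnorm (X k) ^ 2 - d\<bar> < e^2 / 4"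
    unfolding LIMSEQ_iff real_norm_def by blast
  have "cnorm (X m - X n) < e" if "N \<le> m" "N \<le> n" for m n
  proof -
    have "d \<le> cnorm (scaleC (1/2) (X m + X n)) ^ 2"
      using lower midpoint X(1) by blast
    then have "4 * d \<le> cnorm (X m + X n) ^ 2"
      by (simp add: cnorm_scaleC power_divide)
    then have "cnorm (X m - X n) ^ 2 < e ^ 2"
      using parallelogram [of "X m" "X n"] N [OF that(1)] N [OF that(2)] by linarith
    then show ?thesis
      using \<open>e > 0\<close> by (simp add: power_less_imp_less_base)
  qed
  then show "\<exists>N::nat. \<forall>m\<ge>N. \<forall>n\<ge>N. cnorm (X m - X n) < e"
    by blast
qed

lemma min_norm_orthogonal:
  fixes L w :: "'a::complex_hilbert"
  assumes min: "\<And>t. cnorm L \<le> cnorm (L + scaleC t w)"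
  shows "cinner w L = 0"
proof (rule ccontr)
  define c where "c = cinner w L"
  assume "cinner w L \<noteq> 0"
  then have c: "(cmod c)^2 > 0"
    by (simp add: c_def)
  define s where "s = 1 / (cnorm w ^ 2 + 1)"
  have w: "0 < cnorm w ^ 2 + 1"
    by (simp add: add_nonneg_pos)
  then have s: "s > 0" "s * cnorm w ^ 2 < 1"
    by (simp_all add: s_def)
  define t where "t = - complex_of_real s * cnj c"
  have "t * c = - complex_of_real (s * (cmod c)^2)"
    by (simp add: t_def complex_norm_square [symmetric] mult.commute)
  moreover have "cmod t = s * cmod c"
    using s by (simp add: t_def norm_mult)
  ultimately have "cnorm (L + scaleC t w) ^ 2 = cnorm L ^ 2 - s * (cmod c)^2 * (2 - s * cnorm w ^ 2)"
    unfolding cnorm_add_scaleC_square c_def by (simp add: power2_eq_square algebra_simps)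
  also have "\<dots> < cnorm L ^ 2"
    using s c by simp
  finally show False
    using min [of t] by (meson cnorm_nonneg not_le power_mono)
qed

lemma hyperplane_min_norm_point:
  fixes f :: "'a::complex_hilbert \<Rightarrow> complex"
  assumes add: "\<And>x y. f (x + y) = f x + f y" and scale: "\<And>c x. f (scaleC c x) = c * f x"
    and bounded: "\<And>x. cmod (f x) \<le> C * cnorm x" and "f x0 \<noteq> 0"
  obtains L where "f L = 1" "\<And>x. f x = 1 \<Longrightarrow> cnorm L \<le> cnorm x"
proof -
  define A where "A = {x. f x = 1}"
  define d where "d = Inf ((\<lambda>x. cnorm x ^ 2) ` A)"
  have "scaleC (1 / f x0) x0 \<in> A"
    using \<open>f x0 \<noteq> 0\<close> by (simp add: A_def scale)
  then have "A \<noteq> {}"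
    by blast
  then obtain X where X: "\<And>k. X k \<in> A" "(\<lambda>k. cnorm (X k) ^ 2) \<longlonglongrightarrow> d"
    unfolding d_def by (rule minimizing_sequence [where g = "\<lambda>x. cnorm x ^ 2"]) auto
  have lower: "d \<le> cnorm x ^ 2" if "x \<in> A" for x
    unfolding d_def using that by (intro cInf_lower bdd_belowI2 [where m = 0]) auto
  have "scaleC (1/2) (x + y) \<in> A" if "x \<in> A" "y \<in> A" for x y
    using that by (simp add: A_def add scale)
  from minimizing_sequence_Cauchy [OF this lower X]
  obtain L where L: "(\<lambda>n. cnorm (X n - L)) \<longlonglongrightarrow> 0"
    by (rule cnorm_Cauchy_convergent)
  have f_diff: "f x - f y = f (x - y)" for x y
    using add [of "x - y" y] by simp
  have "(\<lambda>n. f (X n)) \<longlonglongrightarrow> f L"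
    using L by (rule lipschitz_tendsto_cnorm [where C = C]) (simp add: f_diff bounded)
  moreover have "(\<lambda>n. f (X n)) = (\<lambda>n. 1)"
    using X(1) by (simp add: A_def)
  ultimately have "f L = 1"
    using LIMSEQ_unique tendsto_const by metis
  have "(\<lambda>n. cnorm (X n) ^ 2) \<longlonglongrightarrow> cnorm L ^ 2"
    using cnorm_tendsto [OF L] by (rule tendsto_power)
  then have "cnorm L ^ 2 = d"
    using X(2) by (rule LIMSEQ_unique)
  then have "cnorm L \<le> cnorm x" if "f x = 1" for x
    using lower [of x] that by (simp add: A_def cnorm_nonneg power2_le_imp_le)
  with \<open>f L = 1\<close> show ?thesis
    by (rule that)
qed

lemma riesz_representation:
  fixes f :: "'a::complex_hilbert \<Rightarrow> complex"
  assumes add: "\<And>x y. f (x + y) = f x + f y" and scale: "\<And>c x. f (scaleC c x) = c * f x"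
    and bounded: "\<And>x. cmod (f x) \<le> C * cnorm x"
  obtains y where "\<And>x. f x = cinner x y"
proof (cases "\<forall>x. f x = 0")
  case True
  then show ?thesis
    using that [of 0] by simp
next
  case False
  then obtain L where L: "f L = 1" and min: "\<And>x. f x = 1 \<Longrightarrow> cnorm L \<le> cnorm x"
    using hyperplane_min_norm_point [OF add scale bounded] by metis
  have f_zero: "f 0 = 0"
    using scale [of 0 0] by simp
  have f_diff: "f (x - y) = f x - f y" for x y
    using add [of "x - y" y] by simp
  have orth: "cinner w L = 0" if "f w = 0" for w
    using that by (intro min_norm_orthogonal min) (simp add: add scale L)
  have "cinner x L = f x * complex_of_real (cnorm L ^ 2)" for x
    using orth [of "x - scaleC (f x) L"]
    by (simp add: f_diff scale L cinner_diff_left cinner_scaleC_left cinner_self_eq_cnorm)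
  moreover have "cnorm L \<noteq> 0"
    using L f_zero by auto
  ultimately have "f x = cinner x (scaleC (complex_of_real (1 / cnorm L ^ 2)) L)" for x
    by (simp add: cinner_scaleC_right)
  then show ?thesis
    by (rule that)
qed

definition is_adjoint :: "('a::complex_hilbert \<Rightarrow> 'a) \<Rightarrow> ('a \<Rightarrow> 'a) \<Rightarrow> bool" where
  "is_adjoint T S \<longleftrightarrow> (\<forall>x y. cinner (T x) y = cinner x (S y))"

lemma adj_eqI:
  assumes "is_adjoint T S"
  shows "adj T = S"
  unfolding adj_def
proof (rule the_equality)
  show "\<forall>x y. cinner (T x) y = cinner x (S y)"
    using assms by (simp add: is_adjoint_def)
next
  fix S'
  assume S': "\<forall>x y. cinner (T x) y = cinner x (S' y)"
  show "S' = S"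
  proof
    fix y
    have "cinner x (S' y - S y) = 0" for x
      using S' assms by (simp add: is_adjoint_def cinner_diff_right)
    then show "S' y = S y"
      using cinner_eq_zero_iff [of "S' y - S y"] by simp
  qed
qed

lemma BH_add: "T \<in> BH \<Longrightarrow> T (x + y) = T x + T y"
  by (simp add: BH_def bounded_op_def)

lemma BH_scaleC: "T \<in> BH \<Longrightarrow> T (scaleC c x) = scaleC c (T x)"
  by (simp add: BH_def bounded_op_def)

lemma BH_zero: "T \<in> BH \<Longrightarrow> T 0 = 0"
  using BH_add [of T 0 0] by simp

lemma BH_sum: "T \<in> BH \<Longrightarrow> T (sum f A) = (\<Sum>i\<in>A. T (f i))"
  by (induct A rule: infinite_finite_induct) (simp_all add: BH_zero BH_add)

lemma BH_bound:
  assumes "T \<in> BH"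
  obtains K where "K \<ge> 0" "\<And>x. cnorm (T x) \<le> K * cnorm x"
proof -
  obtain K where K: "\<And>x. cnorm (T x) \<le> K * cnorm x"
    using assms by (auto simp: BH_def bounded_op_def)
  have "cnorm (T x) \<le> \<bar>K\<bar> * cnorm x" for x
    using K [of x] cnorm_nonneg [of x] by (metis abs_ge_self mult_right_mono order_trans)
  then show ?thesis
    using that [of "\<bar>K\<bar>"] by simp
qed

lemma is_adjoint_adj:
  assumes "T \<in> BH"
  shows "is_adjoint T (adj T)"
proof -
  obtain K where K: "K \<ge> 0" "\<And>x. cnorm (T x) \<le> K * cnorm x"
    using BH_bound [OF assms] by blast
  have "\<exists>z. \<forall>x. cinner (T x) y = cinner x z" for y
  proof -
    have "cmod (cinner (T x) y) \<le> K * cnorm y * cnorm x" for x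
      using cauchy_schwarz [of "T x" y] mult_right_mono [OF K(2) cnorm_nonneg [of y], of x]
      by (simp add: mult.commute mult.left_commute)
    with riesz_representation [of "\<lambda>x. cinner (T x) y"] show ?thesis
      using assms by (metis BH_add BH_scaleC cinner_add_left cinner_scaleC_left)
  qed
  then obtain S where "\<And>x y. cinner (T x) y = cinner x (S y)"
    by metis
  then have "is_adjoint T S"
    by (simp add: is_adjoint_def)
  then show ?thesis
    using adj_eqI by metis
qed

lemma op_pos_iff: "op_pos T \<longleftrightarrow> T \<in> BH \<and> (\<forall>\<xi>. 0 \<le> cinner (T \<xi>) \<xi>)"
  by (auto simp: op_pos_def less_eq_complex_def)

(* Polarization: a sesquilinear form vanishing on the diagonal vanishes identically. *)
lemma op_pos_self_adjoint:
  assumes "op_pos T"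
  shows "is_adjoint T T"
proof -
  have T: "T \<in> BH" and pos: "\<And>x. 0 \<le> cinner (T x) x"
    using assms by (simp_all add: op_pos_iff)
  define B where "B x y = cinner (T x) y - cinner x (T y)" for x y
  have diag: "B x x = 0" for x
    using pos [of x] cinner_commute [of x "T x"]
    by (simp add: B_def less_eq_complex_def complex_eq_iff)
  have add: "B (x + y) (x + y) = B x x + B x y + B y x + B y y" for x y
    using T by (simp add: B_def BH_add cinner_add_left cinner_add_right algebra_simps)
  have "B x y = 0" for x y
  proof -
    have "B x y + B y x = 0"
      using add [of x y] diag by simp
    moreover have "B x (scaleC \<i> y) + B (scaleC \<i> y) x = 0"
      using add [of x "scaleC \<i> y"] diag by simp
    then have "\<i> * (B y x - B x y) = 0"
      using T by (simp add: B_def BH_scaleC cinner_scaleC_left cinner_scaleC_right algebra_simps)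
    ultimately show ?thesis
      by simp
  qed
  then show ?thesis
    by (simp add: is_adjoint_def B_def)
qed

lemma projection_self_adjoint: "is_projection p \<Longrightarrow> is_adjoint p p"
  using is_adjoint_adj [of p] by (simp add: is_projection_def)

lemma is_adjoint_zero: "is_adjoint op_zero op_zero"
  by (simp add: is_adjoint_def op_zero_def)

lemma is_adjoint_add:
  "is_adjoint S S' \<Longrightarrow> is_adjoint T T' \<Longrightarrow> is_adjoint (op_add S T) (op_add S' T')"
  by (simp add: is_adjoint_def op_add_def cinner_add_left cinner_add_right)

lemma is_adjoint_diff:
  "is_adjoint S S' \<Longrightarrow> is_adjoint T T' \<Longrightarrow> is_adjoint (op_diff S T) (op_diff S' T')"
  by (simp add: is_adjoint_def op_diff_def cinner_diff_left cinner_diff_right)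

lemma is_adjoint_scaleC:
  "is_adjoint S S' \<Longrightarrow> is_adjoint (\<lambda>x. scaleC c (S x)) (\<lambda>x. scaleC (cnj c) (S' x))"
  by (simp add: is_adjoint_def cinner_scaleC_left cinner_scaleC_right)

lemma is_adjoint_sum:
  "(\<And>i. i \<in> A \<Longrightarrow> is_adjoint (f i) (g i)) \<Longrightarrow>
    is_adjoint (\<lambda>x. \<Sum>i\<in>A. f i x) (\<lambda>x. \<Sum>i\<in>A. g i x)"
  by (simp add: is_adjoint_def cinner_sum_left cinner_sum_right)

lemma op_add_zero [simp]: "op_add op_zero op_zero = op_zero"
  by (simp add: op_add_def op_zero_def)

lemma op_diff_zero [simp]: "op_diff op_zero op_zero = op_zero"
  by (simp add: op_diff_def op_zero_def)

lemma op_scale_zero [simp]: "op_scale c op_zero = op_zero"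
  by (simp add: op_scale_def op_zero_def)

lemma operator_system_diff:
  assumes "operator_system V" "S \<in> V" "T \<in> V"
  shows "op_diff S T \<in> V"
proof -
  have "op_diff S T = op_add S (op_scale (- 1) T)"
    by (simp add: op_diff_def op_add_def op_scale_def scaleC_minus_left scaleC_one)
  then show ?thesis
    using assms by (simp add: operator_system_def)
qed

lemma operator_system_sum:
  assumes "operator_system V" "\<And>i. i \<in> A \<Longrightarrow> f i \<in> V"
  shows "(\<lambda>x. \<Sum>i\<in>A. f i x) \<in> V"
  using assms(2)
proof (induct A rule: infinite_finite_induct)
  case (insert a F)
  then have "op_add (f a) (\<lambda>x. \<Sum>i\<in>F. f i x) \<in> V"
    using assms(1) by (simp add: operator_system_def)
  with insert(1,2) show ?case
    by (simp add: op_add_def)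
qed (use assms(1) in \<open>simp_all add: operator_system_def op_zero_def\<close>)

lemma herm_mats_iff:
  assumes "operator_system V"
  shows "x \<in> herm_mats V n \<longleftrightarrow>
    x \<in> mats V n \<and> (\<forall>i<n. \<forall>j<n. is_adjoint (x i j) (x j i))"
proof
  assume x: "x \<in> herm_mats V n"
  then have mats: "x \<in> mats V n"
    unfolding herm_mats_def by blast
  have "is_adjoint (x i j) (x j i)" if "i < n" "j < n" for i j
  proof -
    have "x i j \<in> BH"
      using mats that assms unfolding mats_def operator_system_def by blast
    moreover have "x j i = adj (x i j)"
      using x that unfolding herm_mats_def by blast
    ultimately show ?thesis
      using is_adjoint_adj [of "x i j"] by simp
  qed
  with mats show "x \<in> mats V n \<and> (\<forall>i<n. \<forall>j<n. is_adjoint (x i j) (x j i))"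
    by blast
next
  assume x: "x \<in> mats V n \<and> (\<forall>i<n. \<forall>j<n. is_adjoint (x i j) (x j i))"
  then have "x i j = adj (x j i)" if "i < n" "j < n" for i j
    using adj_eqI [of "x j i" "x i j"] that by simp
  with x show "x \<in> herm_mats V n"
    unfolding herm_mats_def by blast
qed

lemma herm_matsI:
  assumes "operator_system V"
    and "\<And>i j. i < n \<Longrightarrow> j < n \<Longrightarrow> x i j \<in> V"
    and "\<And>i j. \<not> (i < n \<and> j < n) \<Longrightarrow> x i j = op_zero"
    and "\<And>i j. i < n \<Longrightarrow> j < n \<Longrightarrow> is_adjoint (x i j) (x j i)"
  shows "x \<in> herm_mats V n"
  using assms by (simp add: herm_mats_iff mats_def)

lemma herm_matsD:
  assumes "operator_system V" "x \<in> herm_mats V n"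
  shows "\<And>i j. i < n \<Longrightarrow> j < n \<Longrightarrow> x i j \<in> V"
    and "\<And>i j. \<not> (i < n \<and> j < n) \<Longrightarrow> x i j = op_zero"
    and "\<And>i j. i < n \<Longrightarrow> j < n \<Longrightarrow> is_adjoint (x i j) (x j i)"
  using assms by (simp_all add: herm_mats_iff mats_def)

lemma herm_mats_BH:
  assumes "operator_system V" "x \<in> herm_mats V n" "i < n" "j < n"
  shows "x i j \<in> BH"
  using herm_matsD(1) [OF assms] assms(1) unfolding operator_system_def by blast

lemma mat_add_herm_mats:
  assumes V: "operator_system V" and x: "x \<in> herm_mats V n" and y: "y \<in> herm_mats V n"
  shows "mat_add x y \<in> herm_mats V n"
proof (rule herm_matsI [OF V])
  fix i j
  show "i < n \<Longrightarrow> j < n \<Longrightarrow> mat_add x y i j \<in> V"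
    using V herm_matsD(1) [OF V x] herm_matsD(1) [OF V y] by (simp add: mat_add_def operator_system_def)
  show "\<not> (i < n \<and> j < n) \<Longrightarrow> mat_add x y i j = op_zero"
    using herm_matsD(2) [OF V x] herm_matsD(2) [OF V y] by (simp add: mat_add_def)
  show "i < n \<Longrightarrow> j < n \<Longrightarrow> is_adjoint (mat_add x y i j) (mat_add x y j i)"
    using herm_matsD(3) [OF V x] herm_matsD(3) [OF V y] by (simp add: mat_add_def is_adjoint_add)
qed

lemma mat_diff_herm_mats:
  assumes V: "operator_system V" and x: "x \<in> herm_mats V n" and y: "y \<in> herm_mats V n"
  shows "mat_diff x y \<in> herm_mats V n"
proof (rule herm_matsI [OF V])
  fix i j
  show "i < n \<Longrightarrow> j < n \<Longrightarrow> mat_diff x y i j \<in> V"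
    using herm_matsD(1) [OF V x] herm_matsD(1) [OF V y] by (simp add: mat_diff_def operator_system_diff [OF V])
  show "\<not> (i < n \<and> j < n) \<Longrightarrow> mat_diff x y i j = op_zero"
    using herm_matsD(2) [OF V x] herm_matsD(2) [OF V y] by (simp add: mat_diff_def)
  show "i < n \<Longrightarrow> j < n \<Longrightarrow> is_adjoint (mat_diff x y i j) (mat_diff x y j i)"
    using herm_matsD(3) [OF V x] herm_matsD(3) [OF V y] by (simp add: mat_diff_def is_adjoint_diff)
qed

lemma mat_scaleR_herm_mats:
  assumes V: "operator_system V" and x: "x \<in> herm_mats V n"
  shows "mat_scaleR t x \<in> herm_mats V n"
proof (rule herm_matsI [OF V])
  fix i j
  show "i < n \<Longrightarrow> j < n \<Longrightarrow> mat_scaleR t x i j \<in> V"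
    using V herm_matsD(1) [OF V x] by (simp add: mat_scaleR_def operator_system_def)
  show "\<not> (i < n \<and> j < n) \<Longrightarrow> mat_scaleR t x i j = op_zero"
    using herm_matsD(2) [OF V x] by (simp add: mat_scaleR_def)
  show "i < n \<Longrightarrow> j < n \<Longrightarrow> is_adjoint (mat_scaleR t x i j) (mat_scaleR t x j i)"
    using is_adjoint_scaleC [OF herm_matsD(3) [OF V x], of i j "complex_of_real t"]
    by (simp add: mat_scaleR_def op_scale_def)
qed

lemma ampl_herm_mats:
  assumes V: "operator_system V" and "q \<in> V" "is_adjoint q q"
  shows "ampl n q \<in> herm_mats V n"
proof (rule herm_matsI [OF V])
  have "op_zero \<in> V"
    using V by (simp add: operator_system_def)
  then show "\<And>i j. i < n \<Longrightarrow> j < n \<Longrightarrow> ampl n q i j \<in> V"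
    using assms by (simp add: ampl_def)
  show "\<And>i j. \<not> (i < n \<and> j < n) \<Longrightarrow> ampl n q i j = op_zero"
    by (auto simp: ampl_def)
  show "\<And>i j. i < n \<Longrightarrow> j < n \<Longrightarrow> is_adjoint (ampl n q i j) (ampl n q j i)"
    using assms by (simp add: ampl_def is_adjoint_zero)
qed

lemma is_adjoint_lincomb:
  assumes "\<And>i j. i \<in> A \<Longrightarrow> j \<in> A \<Longrightarrow> is_adjoint (x i j) (x j i)"
  shows "is_adjoint (\<lambda>\<xi>. \<Sum>i\<in>A. \<Sum>j\<in>A. scaleC (c i j) (x i j \<xi>))
    (\<lambda>\<xi>. \<Sum>i\<in>A. \<Sum>j\<in>A. scaleC (cnj (c j i)) (x i j \<xi>))"
proof -
  have "is_adjoint (\<lambda>\<xi>. \<Sum>i\<in>A. \<Sum>j\<in>A. scaleC (c i j) (x i j \<xi>))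
    (\<lambda>\<xi>. \<Sum>i\<in>A. \<Sum>j\<in>A. scaleC (cnj (c i j)) (x j i \<xi>))"
    by (rule is_adjoint_sum, rule is_adjoint_sum, rule is_adjoint_scaleC) (simp add: assms)
  then show ?thesis
    by (subst (asm) sum.swap)
qed

lemma congr_herm_mats:
  assumes V: "operator_system V" and x: "x \<in> herm_mats V n"
  shows "congr n m \<alpha> x \<in> herm_mats V m"
proof (rule herm_matsI [OF V])
  fix k l
  have entry: "(\<lambda>\<xi>. scaleC c (x i j \<xi>)) \<in> V" if "i < n" "j < n" for c i j
    using V herm_matsD(1) [OF V x that] unfolding operator_system_def op_scale_def by blast
  have "(\<lambda>\<xi>. \<Sum>i<n. \<Sum>j<n. scaleC (cnj (\<alpha> i k) * \<alpha> j l) (x i j \<xi>)) \<in> V"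
    by (rule operator_system_sum [OF V], rule operator_system_sum [OF V]) (simp add: entry)
  then show "k < m \<Longrightarrow> l < m \<Longrightarrow> congr n m \<alpha> x k l \<in> V"
    by (simp add: congr_def)
  show "\<not> (k < m \<and> l < m) \<Longrightarrow> congr n m \<alpha> x k l = op_zero"
    by (auto simp: congr_def)
  show "k < m \<Longrightarrow> l < m \<Longrightarrow> is_adjoint (congr n m \<alpha> x k l) (congr n m \<alpha> x l k)"
    using is_adjoint_lincomb [of "{..<n}" x "\<lambda>i j. cnj (\<alpha> i k) * \<alpha> j l"] herm_matsD(3) [OF V x]
    by (simp add: congr_def mult.commute)
qed

section \<open>The quadratic form of an operator matrix\<close>

definition mat_form ::
    "nat \<Rightarrow> (nat \<Rightarrow> nat \<Rightarrow> 'a::complex_hilbert \<Rightarrow> 'a) \<Rightarrow> (nat \<Rightarrow> 'a) \<Rightarrow> complex" where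
  "mat_form n X \<xi> = (\<Sum>i<n. \<Sum>j<n. cinner (X i j (\<xi> j)) (\<xi> i))"

lemma mat_pos_iff_mat_form: "mat_pos n X \<longleftrightarrow> (\<forall>\<xi>. 0 \<le> mat_form n X \<xi>)"
  by (auto simp: mat_pos_def mat_form_def less_eq_complex_def)

lemma mat_form_compress:
  assumes "is_adjoint p p"
  shows "mat_form n (\<lambda>i j. p \<circ> X i j \<circ> p) \<xi> = mat_form n X (\<lambda>i. p (\<xi> i))"
  using assms by (simp add: mat_form_def is_adjoint_def)

lemma Cp_iff:
  assumes "is_adjoint p p"
  shows "x \<in> Cp V p n \<longleftrightarrow>
    x \<in> herm_mats V n \<and> (\<forall>\<xi>. 0 \<le> mat_form n x (\<lambda>i. p (\<xi> i)))"
  using assms by (simp add: Cp_def mat_pos_iff_mat_form mat_form_compress)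

lemma mat_form_add: "mat_form n (mat_add X Y) \<xi> = mat_form n X \<xi> + mat_form n Y \<xi>"
  by (simp add: mat_form_def mat_add_def op_add_def cinner_add_left sum.distrib)

lemma mat_form_diff: "mat_form n (mat_diff X Y) \<xi> = mat_form n X \<xi> - mat_form n Y \<xi>"
  by (simp add: mat_form_def mat_diff_def op_diff_def cinner_diff_left sum_subtractf)

lemma mat_form_scaleR: "mat_form n (mat_scaleR t X) \<xi> = complex_of_real t * mat_form n X \<xi>"
  by (simp add: mat_form_def mat_scaleR_def op_scale_def cinner_scaleC_left sum_distrib_left)

lemma mat_form_ampl: "mat_form n (ampl n q) \<xi> = (\<Sum>i<n. cinner (q (\<xi> i)) (\<xi> i))"
  unfolding mat_form_def ampl_def op_zero_def by (simp add: if_distrib if_distribR cong: if_cong)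

lemma sum_swap_pairs:
  "(\<Sum>a\<in>A. \<Sum>b\<in>B. \<Sum>c\<in>C. \<Sum>d\<in>D. g a b c d)
    = (\<Sum>c\<in>C. \<Sum>d\<in>D. \<Sum>a\<in>A. \<Sum>b\<in>B. g a b c d)"
proof -
  have "(\<Sum>a\<in>A. \<Sum>b\<in>B. \<Sum>c\<in>C. \<Sum>d\<in>D. g a b c d)
      = (\<Sum>a\<in>A. \<Sum>c\<in>C. \<Sum>b\<in>B. \<Sum>d\<in>D. g a b c d)"
    by (simp add: sum.swap [where A = B and B = C])
  also have "\<dots> = (\<Sum>c\<in>C. \<Sum>a\<in>A. \<Sum>b\<in>B. \<Sum>d\<in>D. g a b c d)"
    by (rule sum.swap)
  also have "\<dots> = (\<Sum>c\<in>C. \<Sum>a\<in>A. \<Sum>d\<in>D. \<Sum>b\<in>B. g a b c d)"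
    by (simp add: sum.swap [where A = B and B = D])
  also have "\<dots> = (\<Sum>c\<in>C. \<Sum>d\<in>D. \<Sum>a\<in>A. \<Sum>b\<in>B. g a b c d)"
    by (simp add: sum.swap [where A = A and B = D])
  finally show ?thesis .
qed

lemma mat_form_congr:
  assumes "\<And>i j. i < n \<Longrightarrow> j < n \<Longrightarrow> x i j \<in> BH"
  shows "mat_form m (congr n m \<alpha> x) \<xi> = mat_form n x (\<lambda>i. \<Sum>l<m. scaleC (\<alpha> i l) (\<xi> l))"
proof -
  define g where "g k l i j = cnj (\<alpha> i k) * \<alpha> j l * cinner (x i j (\<xi> l)) (\<xi> k)" for k l i j
  have "mat_form m (congr n m \<alpha> x) \<xi> = (\<Sum>k<m. \<Sum>l<m. \<Sum>i<n. \<Sum>j<n. g k l i j)"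
    by (simp add: mat_form_def congr_def g_def cinner_sum_left cinner_scaleC_left)
  also have "\<dots> = (\<Sum>i<n. \<Sum>j<n. \<Sum>k<m. \<Sum>l<m. g k l i j)"
    by (rule sum_swap_pairs)
  also have "\<dots> = mat_form n x (\<lambda>i. \<Sum>l<m. scaleC (\<alpha> i l) (\<xi> l))"
    using assms
    by (auto simp: mat_form_def g_def BH_sum BH_scaleC cinner_sum_left cinner_sum_right
        cinner_scaleC_left cinner_scaleC_right sum_distrib_left mult_ac intro!: sum.cong
        intro: sum.swap)
  finally show ?thesis .
qed

lemma mat_form_Im_eq_0:
  assumes "\<And>i j. i < n \<Longrightarrow> j < n \<Longrightarrow> is_adjoint (x i j) (x j i)"
  shows "Im (mat_form n x \<xi>) = 0"
proof -
  have "cnj (cinner (x i j (\<xi> j)) (\<xi> i)) = cinner (x j i (\<xi> i)) (\<xi> j)" if "i < n" "j < n" for i j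
    using assms [OF that(2,1)] cinner_commute [of "\<xi> i"] by (simp add: is_adjoint_def)
  then have "cnj (mat_form n x \<xi>) = (\<Sum>i<n. \<Sum>j<n. cinner (x j i (\<xi> i)) (\<xi> j))"
    by (simp add: mat_form_def)
  also have "\<dots> = mat_form n x \<xi>"
    unfolding mat_form_def by (rule sum.swap)
  finally show ?thesis
    by (simp add: complex_eq_iff)
qed

lemma mat_form_Re_bound:
  assumes "\<And>i j. i < n \<Longrightarrow> j < n \<Longrightarrow> x i j \<in> BH"
  obtains K where "\<And>\<xi>. Re (mat_form n x \<xi>) \<le> K * (\<Sum>i<n. cnorm (\<xi> i) ^ 2)"
proof -
  have "\<forall>i j. \<exists>K. i < n \<and> j < n \<longrightarrow> K \<ge> 0 \<and> (\<forall>v. cnorm (x i j v) \<le> K * cnorm v)"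
    using assms BH_bound by metis
  then obtain Kx where
    Kx: "\<And>i j v. i < n \<Longrightarrow> j < n \<Longrightarrow> Kx i j \<ge> 0 \<and> cnorm (x i j v) \<le> Kx i j * cnorm v"
    by metis
  define S where "S \<xi> = (\<Sum>i<n. cnorm (\<xi> i) ^ 2)" for \<xi> :: "nat \<Rightarrow> 'a"
  have "Re (cinner (x i j (\<xi> j)) (\<xi> i)) \<le> Kx i j * S \<xi>" if "i < n" "j < n" for \<xi> i j
  proof -
    define M where "M = max (cnorm (\<xi> i)) (cnorm (\<xi> j))"
    have "cnorm (\<xi> j) * cnorm (\<xi> i) \<le> M * M"
      unfolding M_def by (rule mult_mono) (simp_all add: cnorm_nonneg le_max_iff_disj)
    also have "\<dots> = M ^ 2"
      by (simp add: power2_eq_square)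
    also have "\<dots> \<le> S \<xi>"
      unfolding S_def M_def using \<open>i < n\<close> \<open>j < n\<close>
      by (auto simp: max_def intro: member_le_sum [where f = "\<lambda>k. cnorm (\<xi> k) ^ 2"])
    finally have norms: "cnorm (\<xi> j) * cnorm (\<xi> i) \<le> S \<xi>" .
    have "Re (cinner (x i j (\<xi> j)) (\<xi> i)) \<le> cnorm (x i j (\<xi> j)) * cnorm (\<xi> i)"
      using cauchy_schwarz complex_Re_le_cmod order_trans by blast
    also have "\<dots> \<le> Kx i j * (cnorm (\<xi> j) * cnorm (\<xi> i))"
      using mult_right_mono [OF conjunct2 [OF Kx [OF that, of "\<xi> j"]] cnorm_nonneg [of "\<xi> i"]]
      by (simp add: mult.assoc)
    also have "\<dots> \<le> Kx i j * S \<xi>"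
      using Kx [OF that] norms by (simp add: mult_left_mono)
    finally show ?thesis .
  qed
  then have "Re (mat_form n x \<xi>) \<le> (\<Sum>i<n. \<Sum>j<n. Kx i j) * S \<xi>" for \<xi>
    unfolding mat_form_def Re_sum sum_distrib_right by (intro sum_mono) simp
  then show ?thesis
    using that unfolding S_def by blast
qed

lemma complex_nonneg_if_add_eps_nonneg:
  fixes a b :: complex
  assumes "\<And>\<epsilon>. \<epsilon> > 0 \<Longrightarrow> 0 \<le> a + complex_of_real \<epsilon> * b"
  shows "0 \<le> a"
proof -
  have "Im a + Im b = 0" "Im a + 2 * Im b = 0"
    using assms [of 1] assms [of 2] by (simp_all add: less_eq_complex_def)
  then have "Im a = 0"
    by linarith
  have Re_nonneg: "0 \<le> Re a + \<epsilon> * Re b" if "\<epsilon> > 0" for \<epsilon>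
    using assms [OF that] by (simp add: less_eq_complex_def)
  have "(\<lambda>k. Re a + inverse (Suc k) * Re b) \<longlonglongrightarrow> Re a + 0 * Re b"
    by (intro tendsto_intros LIMSEQ_inverse_real_of_nat)
  moreover have "0 \<le> Re a + inverse (Suc k) * Re b" for k
    by (rule Re_nonneg) simp
  ultimately have "0 \<le> Re a"
    using LIMSEQ_le_const by force
  with \<open>Im a = 0\<close> show ?thesis
    by (simp add: less_eq_complex_def)
qed

lemma Cp_add:
  assumes "operator_system V" "is_adjoint p p" "x \<in> Cp V p n" "y \<in> Cp V p n"
  shows "mat_add x y \<in> Cp V p n"
  using assms by (simp add: Cp_iff mat_add_herm_mats mat_form_add)

lemma Cp_scaleR:
  assumes "operator_system V" "is_adjoint p p" "x \<in> Cp V p n" "t \<ge> 0"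
  shows "mat_scaleR t x \<in> Cp V p n"
  using assms by (simp add: Cp_iff mat_scaleR_herm_mats mat_form_scaleR less_eq_complex_def)

lemma Cp_congr:
  assumes V: "operator_system V" and p: "p \<in> BH" "is_adjoint p p" and x: "x \<in> Cp V p n"
  shows "congr n m \<alpha> x \<in> Cp V p m"
proof -
  have xh: "x \<in> herm_mats V n"
    using x p by (simp add: Cp_iff)
  have "x i j \<in> BH" if "i < n" "j < n" for i j
    using V xh that by (rule herm_mats_BH)
  then have "mat_form m (congr n m \<alpha> x) (\<lambda>l. p (\<xi> l))
      = mat_form n x (\<lambda>i. p (\<Sum>l<m. scaleC (\<alpha> i l) (\<xi> l)))" for \<xi>
    using p by (simp add: mat_form_congr BH_sum BH_scaleC)
  then show ?thesis
    using x p congr_herm_mats [OF V xh] by (simp add: Cp_iff)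
qed

lemma matrix_ordering_Cp:
  assumes "operator_system V" "p \<in> BH" "is_adjoint p p"
  shows "matrix_ordering V (Cp V p)"
proof -
  have "Cp V p n \<subseteq> herm_mats V n" for n
    by (auto simp: Cp_def)
  then show ?thesis
    using Cp_add [OF assms(1,3)] Cp_scaleR [OF assms(1,3)] Cp_congr [OF assms]
    unfolding matrix_ordering_def is_cone_def by blast
qed

section \<open>The Archimedean matrix order unit\<close>

lemma op_le_cinner:
  assumes "op_le S T"
  shows "cinner (S v) v \<le> cinner (T v) v"
  using assms by (simp add: op_le_def op_pos_iff op_diff_def cinner_diff_left)

lemma op_le_self_adjoint:
  assumes "op_le p q" "is_adjoint p p"
  shows "is_adjoint q q"
proof -
  have "is_adjoint (op_add (op_diff q p) p) (op_add (op_diff q p) p)"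
    using assms by (simp add: is_adjoint_add op_pos_self_adjoint op_le_def)
  moreover have "op_add (op_diff q p) p = q"
    by (simp add: op_add_def op_diff_def)
  ultimately show ?thesis
    by simp
qed

lemma mat_form_ampl_lower_bound:
  assumes "op_le p q" "\<And>i. p (\<eta> i) = \<eta> i"
  shows "complex_of_real (\<Sum>i<n. cnorm (\<eta> i) ^ 2) \<le> mat_form n (ampl n q) \<eta>"
proof -
  have "complex_of_real (\<Sum>i<n. cnorm (\<eta> i) ^ 2) = (\<Sum>i<n. cinner (p (\<eta> i)) (\<eta> i))"
    by (simp add: assms(2) cinner_self_eq_cnorm)
  also have "\<dots> \<le> mat_form n (ampl n q) \<eta>"
    unfolding mat_form_ampl using op_le_cinner [OF assms(1)] by (rule sum_mono)
  finally show ?thesis .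
qed

lemma Cp_order_unit:
  assumes V: "operator_system V" and p: "is_projection p" and q: "q \<in> V" "op_le p q"
    and x: "x \<in> herm_mats V n"
  shows "\<exists>r>0. mat_diff (mat_scaleR r (ampl n q)) x \<in> Cp V p n"
proof -
  have hp: "is_adjoint p p" and pp: "\<And>v. p (p v) = p v"
    using p projection_self_adjoint by (auto simp: is_projection_def fun_eq_iff)
  have hq: "is_adjoint q q"
    using op_le_self_adjoint q(2) hp .
  have "x i j \<in> BH" if "i < n" "j < n" for i j
    using V x that by (rule herm_mats_BH)
  then obtain K where K: "\<And>\<xi>. Re (mat_form n x \<xi>) \<le> K * (\<Sum>i<n. cnorm (\<xi> i) ^ 2)"
    using mat_form_Re_bound by metis
  define r where "r = \<bar>K\<bar> + 1"
  have "0 \<le> mat_form n (mat_diff (mat_scaleR r (ampl n q)) x) \<eta>"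
    if "\<And>i. p (\<eta> i) = \<eta> i" for \<eta>
  proof -
    define N where "N = (\<Sum>i<n. cnorm (\<eta> i) ^ 2)"
    have "complex_of_real N \<le> mat_form n (ampl n q) \<eta>"
      unfolding N_def using q(2) that by (rule mat_form_ampl_lower_bound)
    then have q_form: "N \<le> Re (mat_form n (ampl n q) \<eta>)" "Im (mat_form n (ampl n q) \<eta>) = 0"
      by (simp_all add: less_eq_complex_def)
    have x_real: "Im (mat_form n x \<eta>) = 0"
      by (rule mat_form_Im_eq_0) (rule herm_matsD(3) [OF V x])
    have "N \<ge> 0"
      by (simp add: N_def sum_nonneg)
    have "Re (mat_form n x \<eta>) \<le> K * N"
      unfolding N_def by (rule K)
    also have "\<dots> \<le> r * N"
      using \<open>N \<ge> 0\<close> by (simp add: r_def mult_right_mono)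
    also have "\<dots> \<le> r * Re (mat_form n (ampl n q) \<eta>)"
      using q_form(1) by (intro mult_left_mono) (simp_all add: r_def)
    finally show ?thesis
      using q_form(2) x_real by (simp add: mat_form_diff mat_form_scaleR less_eq_complex_def)
  qed
  moreover have "mat_diff (mat_scaleR r (ampl n q)) x \<in> herm_mats V n"
    using mat_diff_herm_mats [OF V mat_scaleR_herm_mats [OF V ampl_herm_mats [OF V q(1) hq]] x] .
  moreover have "r > 0"
    by (simp add: r_def add_nonneg_pos)
  ultimately show ?thesis
    by (auto simp: Cp_iff hp pp)
qed

lemma Cp_closed:
  assumes "is_adjoint p p" "x \<in> herm_mats V n"
    and "\<And>\<epsilon>. \<epsilon> > 0 \<Longrightarrow> mat_add x (mat_scaleR \<epsilon> u) \<in> Cp V p n"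
  shows "x \<in> Cp V p n"
  using assms
  by (auto simp: Cp_iff mat_form_add mat_form_scaleR intro: complex_nonneg_if_add_eps_nonneg)

theorem proposition3p1:
  fixes V :: "('h::complex_hilbert \<Rightarrow> 'h) set" and p :: "'h \<Rightarrow> 'h"
  assumes "operator_system V" and "p \<in> V" and "is_projection p"
  shows "matrix_ordering V (Cp V p) \<and>
    (\<forall>q\<in>V. op_le p q \<and> op_le q id \<longrightarrow> archimedean_matrix_order_unit V (Cp V p) q)"
proof -
  have "p \<in> BH" and hp: "is_adjoint p p"
    using assms(3) projection_self_adjoint by (auto simp: is_projection_def)
  show ?thesis
    unfolding archimedean_matrix_order_unit_def
    using matrix_ordering_Cp [OF assms(1) \<open>p \<in> BH\<close> hp]
      Cp_order_unit [OF assms(1,3)] Cp_closed [OF hp]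
    by blast
qed

end
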